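(* (a) For pre-subgroups $f,g$ of $V$ the following are equivalent: (i) $V(f\otimes g)=f\otimes g$; (ii) $H^g\subset H^f$; (iii) $H_f\subset H_g$; (iv) $H^{f,g}=H^f$; (v) $H^{g,f}=H^f$; (vi) $H_{f,g}=H_g$; (vii) $H_{g,f}=H_g$. Write $g\prec f$ when these hold. (b) $\prec$ is a partial order on the set of pre-subgroups of $V$; the fixed vector $e$ is its greatest element and the cofixed vector $\hat e$ its least element.
   Context: Let $\mathcal H$ be a Hilbert space of finite dimension $n\ge1$ (inner products linear in the second variable) and $V$ a multiplicative unitary on $\mathcal H$ ($V_{12}V_{13}V_{23}=V_{23}V_{12}$) of multiplicity 1 (fixed vectors, i.e. $\xi$ with $V(\xi\otimes\eta)=\xi\otimes\eta$ for all $\eta$, form a line; then so do cofixed vectors, i.e. $\xi$ with $V(\eta\otimes\xi)=\eta\otimes\xi$ for all $\eta$). Fix a unit fixed vector $e$ and let $\hat e$ be the unit cofixed vector with $\langle e,\hat e\rangle=n^{-1/2}$. $\omega_{\xi,\eta}(T)=\langle\xi,T\eta\rangle$, $L(\omega)=(\omega\otimes\mathrm{id})(V)$, $\rho(\omega)=(\mathrm{id}\otimes\omega)(V)$. A pre-subgroup is $f\in\mathcal H$ with $\|f\|=1$, $\langle f,e\rangle>0$, $V(f\otimes f)=f\otimes f$; $H^f=\{\eta:V(f\otimes\eta)=f\otimes\eta\}$, $H_f=\{\eta:V(\eta\otimes f)=\eta\otimes f\}$. For pre-subgroups $f,g$, $H^{f,g}$ denotes the range of $L(\omega_{f,g})$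 and $H_{f,g}$ the range of $\rho(\omega_{f,g})$. *)

theory Defs
  imports "HOL-Analysis.Analysis"
begin

text \<open>The Hilbert space H of dimension n = CARD('n) is complex^'n; the inner product
  (linear in the second variable) is cinner. Operators on H (x) H are matrices indexed by 'n \<times> 'n,
  operators on H (x) H (x) H are matrices indexed by 'n \<times> 'n \<times> 'n.\<close>

definition cinner :: "complex^'n::finite \<Rightarrow> complex^'n \<Rightarrow> complex" where
  "cinner x y = (\<Sum>i\<in>UNIV. cnj (x$i) * y$i)"

definition cadj :: "complex^'m^'m \<Rightarrow> complex^'m^'m" where
  "cadj M = (\<chi> i j. cnj (M$j$i))"

definition unitary_op :: "complex^'m^'m \<Rightarrow> bool" where
  "unitary_op M \<longleftrightarrow> cadj M ** M = mat 1 \<and> M ** cadj M = mat 1"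

definition tens :: "complex^'n::finite \<Rightarrow> complex^'n \<Rightarrow> complex^('n \<times> 'n)" where
  "tens x y = (\<chi> p. x$(fst p) * y$(snd p))"

definition leg12 :: "complex^('n::finite\<times>'n)^('n\<times>'n) \<Rightarrow> complex^('n\<times>'n\<times>'n)^('n\<times>'n\<times>'n)" where
  "leg12 V = (\<chi> p q. case p of (i,j,k) \<Rightarrow> case q of (i',j',k') \<Rightarrow> V$(i,j)$(i',j') * (if k = k' then 1 else 0))"

definition leg23 :: "complex^('n::finite\<times>'n)^('n\<times>'n) \<Rightarrow> complex^('n\<times>'n\<times>'n)^('n\<times>'n\<times>'n)" where
  "leg23 V = (\<chi> p q. case p of (i,j,k) \<Rightarrow> case q of (i',j',k') \<Rightarrow> (if i = i' then 1 else 0) * V$(j,k)$(j',k'))"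

definition leg13 :: "complex^('n::finite\<times>'n)^('n\<times>'n) \<Rightarrow> complex^('n\<times>'n\<times>'n)^('n\<times>'n\<times>'n)" where
  "leg13 V = (\<chi> p q. case p of (i,j,k) \<Rightarrow> case q of (i',j',k') \<Rightarrow> V$(i,k)$(i',k') * (if j = j' then 1 else 0))"

definition multiplicative_unitary :: "complex^('n::finite\<times>'n)^('n\<times>'n) \<Rightarrow> bool" where
  "multiplicative_unitary V \<longleftrightarrow> unitary_op V \<and>
     leg12 V ** leg13 V ** leg23 V = leg23 V ** leg12 V"

definition fixed_vec :: "complex^('n::finite\<times>'n)^('n\<times>'n) \<Rightarrow> complex^'n \<Rightarrow> bool" where
  "fixed_vec V \<xi> \<longleftrightarrow> (\<forall>\<eta>. V *v tens \<xi> \<eta> = tens \<xi> \<eta>)"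

definition cofixed_vec :: "complex^('n::finite\<times>'n)^('n\<times>'n) \<Rightarrow> complex^'n \<Rightarrow> bool" where
  "cofixed_vec V \<xi> \<longleftrightarrow> (\<forall>\<eta>. V *v tens \<eta> \<xi> = tens \<eta> \<xi>)"

definition multiplicity_one :: "complex^('n::finite\<times>'n)^('n\<times>'n) \<Rightarrow> bool" where
  "multiplicity_one V \<longleftrightarrow>
     (\<exists>\<xi>. \<xi> \<noteq> 0 \<and> {x. fixed_vec V x} = range (\<lambda>c::complex. c *s \<xi>))"

text \<open>L(omega_{xi,eta}) = (omega_{xi,eta} (x) id)(V), characterised by
  <a, L b> = <xi (x) a, V (eta (x) b)>.\<close>
definition Lw :: "complex^('n::finite\<times>'n)^('n\<times>'n) \<Rightarrow> complex^'n \<Rightarrow> complex^'n \<Rightarrow> complex^'n^'n" where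
  "Lw V \<xi> \<eta> = (\<chi> a b. \<Sum>i\<in>UNIV. \<Sum>i'\<in>UNIV. cnj (\<xi>$i) * V$(i,a)$(i',b) * \<eta>$i')"

text \<open>rho(omega_{xi,eta}) = (id (x) omega_{xi,eta})(V), characterised by
  <a, rho b> = <a (x) xi, V (b (x) eta)>.\<close>
definition \<rho>w :: "complex^('n::finite\<times>'n)^('n\<times>'n) \<Rightarrow> complex^'n \<Rightarrow> complex^'n \<Rightarrow> complex^'n^'n" where
  "\<rho>w V \<xi> \<eta> = (\<chi> a b. \<Sum>j\<in>UNIV. \<Sum>j'\<in>UNIV. cnj (\<xi>$j) * V$(a,j)$(b,j') * \<eta>$j')"

definition pre_subgroup :: "complex^('n::finite\<times>'n)^('n\<times>'n) \<Rightarrow> complex^'n \<Rightarrow> complex^'n \<Rightarrow> bool" where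
  "pre_subgroup V e f \<longleftrightarrow> norm f = 1 \<and> Im (cinner f e) = 0 \<and> Re (cinner f e) > 0
     \<and> V *v tens f f = tens f f"

definition Hup :: "complex^('n::finite\<times>'n)^('n\<times>'n) \<Rightarrow> complex^'n \<Rightarrow> (complex^'n) set" where
  "Hup V f = {\<eta>. V *v tens f \<eta> = tens f \<eta>}"

definition Hdown :: "complex^('n::finite\<times>'n)^('n\<times>'n) \<Rightarrow> complex^'n \<Rightarrow> (complex^'n) set" where
  "Hdown V f = {\<eta>. V *v tens \<eta> f = tens \<eta> f}"

definition Hup2 :: "complex^('n::finite\<times>'n)^('n\<times>'n) \<Rightarrow> complex^'n \<Rightarrow> complex^'n \<Rightarrow> (complex^'n) set" where
  "Hup2 V f g = range (\<lambda>x. Lw V f g *v x)"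

definition Hdown2 :: "complex^('n::finite\<times>'n)^('n\<times>'n) \<Rightarrow> complex^'n \<Rightarrow> complex^'n \<Rightarrow> (complex^'n) set" where
  "Hdown2 V f g = range (\<lambda>x. \<rho>w V f g *v x)"

definition sg_le :: "complex^('n::finite\<times>'n)^('n\<times>'n) \<Rightarrow> complex^'n \<Rightarrow> complex^'n \<Rightarrow> bool" where
  "sg_le V g f \<longleftrightarrow> V *v tens f g = tens f g"

end

(*
  Everything rests on the pentagon equation V12 V13 V23 = V23 V12. Applied to a (x) b (x) c it
  shows that if V fixes a (x) b and b (x) c with b <> 0, then V fixes a (x) c: this is transitivity
  of the order and gives (i) <-> (ii) <-> (iii) at once. Inside inner products it makes the slice
  maps multiplicative: L(w_{xi1,eta1}) L(w_{xi2,eta2}) is again a slice map L(w_{xi,eta2}) when V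
  fixes eta1 (x) eta2, and dually for rho. Hence P_f = L(w_{f,f}) and Q_g = rho(w_{g,g}) are
  idempotent, and since V is unitary their fixed points are exactly H^f and H_g: they are the
  orthogonal projections onto these spaces. Multiplicity one makes rho(w_{e,e}) the projection
  onto the line of e, which gives P_f e = <f,e> f and Q_g ehat = <g,ehat> g.
  If g < f, each of L(w_{f,g}), L(w_{g,f}) is a nonzero multiple of the identity on H^f with range
  in H^f, and each of rho(w_{f,g}), rho(w_{g,f}) is a nonzero multiple of Q_g; this gives
  (iv)-(vii). Conversely, a range condition either puts g into H^f (resp. f into H_g) directly, or
  forces <f, Q_g f> = 1, which for the unit vector f means Q_g f = f, i.e. g < f.
  Antisymmetry: g < f < g gives H^f = H^g, so P_f e = P_g e, i.e. <f,e> f = <g,e> g, and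
  positivity of <f,e> and <g,e> forces f = g.
*)

theory Submission
  imports Defs
begin

lemma sum_UNIV_pair: "(\<Sum>p\<in>UNIV. F p) = (\<Sum>i\<in>UNIV. \<Sum>j\<in>UNIV. F (i, j))"
  by (subst sum.cartesian_product) (simp add: case_prod_eta)

lemma sum_UNIV_triple: "(\<Sum>p\<in>UNIV. F p) = (\<Sum>i\<in>UNIV. \<Sum>j\<in>UNIV. \<Sum>k\<in>UNIV. F (i, j, k))"
  by (simp add: sum_UNIV_pair[of F] sum_UNIV_pair[of "\<lambda>q. F (_, q)"])

lemma sum_rotate3:
  "(\<Sum>a\<in>A. \<Sum>b\<in>B. \<Sum>c\<in>C. F a b c) = (\<Sum>b\<in>B. \<Sum>c\<in>C. \<Sum>a\<in>A. F a b c)"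
  by (subst sum.swap) (rule sum.cong[OF refl], rule sum.swap)

lemma cinner_zero_left [simp]: "cinner 0 x = 0"
  by (simp add: cinner_def)

lemma cinner_diff_left: "cinner (x - y) z = cinner x z - cinner y z"
  by (simp add: cinner_def sum_subtractf left_diff_distrib)

lemma cinner_diff_right: "cinner x (y - z) = cinner x y - cinner x z"
  by (simp add: cinner_def sum_subtractf right_diff_distrib)

lemma cinner_scale_left: "cinner (c *s x) y = cnj c * cinner x y"
  by (simp add: cinner_def sum_distrib_left mult_ac)

lemma cinner_scale_right: "cinner x (c *s y) = c * cinner x y"
  by (simp add: cinner_def sum_distrib_left mult_ac)

lemma cinner_commute: "cinner y x = cnj (cinner x y)"
  by (simp add: cinner_def mult.commute)

lemma cinner_self: "cinner x x = complex_of_real ((norm x)\<^sup>2)"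
proof -
  have "cinner x x = (\<Sum>i\<in>UNIV. complex_of_real ((norm (x$i))\<^sup>2))"
    unfolding cinner_def by (rule sum.cong) (simp_all only: complex_norm_square mult.commute)
  also have "\<dots> = complex_of_real (\<Sum>i\<in>UNIV. (norm (x$i))\<^sup>2)" by simp
  also have "(\<Sum>i\<in>UNIV. (norm (x$i))\<^sup>2) = (norm x)\<^sup>2"
    by (simp add: norm_vec_def L2_set_def sum_nonneg)
  finally show ?thesis .
qed

lemma cinner_self_eq_0 [simp]: "cinner x x = 0 \<longleftrightarrow> x = 0"
  by (simp add: cinner_self)

lemma cinner_axis: "cinner (axis i 1) x = x$i"
proof -
  have "cinner (axis i 1) x = (\<Sum>j\<in>UNIV. if j = i then x$j else 0)"
    unfolding cinner_def axis_def by (rule sum.cong) auto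
  then show ?thesis by simp
qed

lemma vec_eq_if_cinner_eq: "(\<And>a. cinner a x = cinner a y) \<Longrightarrow> x = y"
  by (simp add: vec_eq_iff flip: cinner_axis)

lemma eq_if_cinner_diff_eq:
  assumes "cinner (x - y) x = cinner (x - y) y"
  shows "x = y"
proof -
  have "cinner (x - y) (x - y) = 0" using assms by (simp add: cinner_diff_right)
  then show ?thesis by simp
qed

lemma eq_scale_if_cinner_eq:
  assumes "cinner f f = 1" "cinner f x = c" "cinner x x = cnj c * c"
  shows "x = c *s f"
proof -
  have "cinner x f = cnj c" using assms(2) cinner_commute[of x f] by simp
  with assms have "cinner (x - c *s f) (x - c *s f) = 0"
    by (simp add: cinner_diff_left cinner_diff_right cinner_scale_left cinner_scale_right)
  then show ?thesis by simp
qed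

lemma vector_smult_cancel:
  fixes x y :: "complex^'n"
  assumes "a *s x = (a * c) *s y" "a \<noteq> 0"
  shows "x = c *s y"
proof -
  have "a *s x = a *s (c *s y)" using assms(1) by (simp only: vector_smult_assoc)
  then show ?thesis using assms(2) vector_mul_lcancel by blast
qed

lemma range_eq_if_acts_as_scalar:
  fixes M :: "complex^'n^'n"
  assumes "\<And>x. M *v x \<in> S" and "\<And>\<eta>. \<eta> \<in> S \<Longrightarrow> M *v \<eta> = c *s \<eta>" and "c \<noteq> 0"
  shows "range (\<lambda>x. M *v x) = S"
proof -
  have "\<eta> = M *v (inverse c *s \<eta>)" if "\<eta> \<in> S" for \<eta>
    using assms(2,3) that by (simp add: vector_scalar_commute vector_smult_assoc)
  then show ?thesis using assms(1) by blast
qed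

lemma cinner_adj: "cinner x (M *v y) = cinner (cadj M *v x) y"
proof -
  have "cinner x (M *v y) = (\<Sum>i\<in>UNIV. \<Sum>j\<in>UNIV. cnj (x$i) * M$i$j * y$j)"
    by (simp add: cinner_def matrix_vector_mult_def sum_distrib_left mult_ac)
  also have "\<dots> = (\<Sum>j\<in>UNIV. \<Sum>i\<in>UNIV. cnj (x$i) * M$i$j * y$j)"
    by (rule sum.swap)
  also have "\<dots> = cinner (cadj M *v x) y"
    by (simp add: cinner_def matrix_vector_mult_def cadj_def sum_distrib_right sum_distrib_left mult_ac)
  finally show ?thesis .
qed

lemma cadj_cadj [simp]: "cadj (cadj M) = M"
  by (simp add: cadj_def vec_eq_iff)

lemma unitary_op_cinner:
  assumes "unitary_op M"
  shows "cinner (M *v x) (M *v y) = cinner x y"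
  using assms by (simp add: cinner_adj[of "M *v x"] unitary_op_def matrix_vector_mul_assoc)

lemma unitary_op_fixed_iff_Re_cinner:
  assumes "unitary_op M"
  shows "M *v w = w \<longleftrightarrow> Re (cinner w (M *v w)) = Re (cinner w w)"
proof
  assume "Re (cinner w (M *v w)) = Re (cinner w w)"
  moreover have "cinner (M *v w - w) (M *v w - w) = 2 * cinner w w - (cinner w (M *v w) + cnj (cinner w (M *v w)))"
    by (simp add: cinner_diff_left cinner_diff_right unitary_op_cinner[OF assms] cinner_commute[of "M *v w" w])
  ultimately have "Re (cinner (M *v w - w) (M *v w - w)) = 0" by simp
  then show "M *v w = w" by (simp add: cinner_self)
qed simp

lemma unitary_op_fixed_cadj:
  assumes "unitary_op M" "M *v w = w"
  shows "cadj M *v w = w"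
  using assms by (metis matrix_vector_mul_assoc matrix_vector_mul_lid unitary_op_def)

lemma tens_nth [simp]: "tens a b $ (i, j) = a$i * b$j"
  by (simp add: tens_def)

lemma tens_scale_left: "tens (c *s x) y = c *s tens x y"
  by (simp add: vec_eq_iff mult_ac)

lemma tens_scale_right: "tens x (c *s y) = c *s tens x y"
  by (simp add: vec_eq_iff mult_ac)

lemma tens_diff_right: "tens x (y - y') = tens x y - tens x y'"
  by (simp add: vec_eq_iff algebra_simps)

lemma cinner_tens: "cinner (tens a b) (tens c d) = cinner a c * cinner b d"
  by (simp add: cinner_def sum_UNIV_pair sum_product mult_ac)

section \<open>Slice maps\<close>

definition pinner1 :: "complex^'n::finite \<Rightarrow> complex^('n\<times>'n) \<Rightarrow> complex^'n" where
  "pinner1 \<xi> W = (\<chi> j. \<Sum>i\<in>UNIV. cnj (\<xi>$i) * W$(i, j))"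

definition pinner2 :: "complex^'n::finite \<Rightarrow> complex^('n\<times>'n) \<Rightarrow> complex^'n" where
  "pinner2 \<xi> W = (\<chi> i. \<Sum>j\<in>UNIV. cnj (\<xi>$j) * W$(i, j))"

lemma cinner_pinner1: "cinner a (pinner1 \<xi> W) = cinner (tens \<xi> a) W"
proof -
  have "cinner a (pinner1 \<xi> W) = (\<Sum>j\<in>UNIV. \<Sum>i\<in>UNIV. cnj (a$j) * cnj (\<xi>$i) * W$(i, j))"
    by (simp add: cinner_def pinner1_def sum_distrib_left mult_ac)
  also have "\<dots> = cinner (tens \<xi> a) W"
    by (subst sum.swap) (simp add: cinner_def sum_UNIV_pair mult_ac)
  finally show ?thesis .
qed

lemma cinner_pinner2: "cinner a (pinner2 \<xi> W) = cinner (tens a \<xi>) W"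
  by (simp add: cinner_def pinner2_def sum_UNIV_pair sum_distrib_left mult_ac)

lemma pinner1_tens: "pinner1 \<xi> (tens x y) = cinner \<xi> x *s y"
  by (simp add: vec_eq_iff pinner1_def cinner_def sum_distrib_left sum_distrib_right mult_ac)

lemma pinner2_tens: "pinner2 \<xi> (tens x y) = cinner \<xi> y *s x"
  by (simp add: vec_eq_iff pinner2_def cinner_def sum_distrib_left mult_ac)

lemma Lw_apply: "Lw V \<xi> \<eta> *v b = pinner1 \<xi> (V *v tens \<eta> b)"
  by (simp add: vec_eq_iff Lw_def pinner1_def matrix_vector_mult_def sum_UNIV_pair
      sum_distrib_left sum_distrib_right mult_ac) (rule allI, rule sum_rotate3)

lemma \<rho>w_apply: "\<rho>w V \<xi> \<eta> *v b = pinner2 \<xi> (V *v tens b \<eta>)"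
  by (simp add: vec_eq_iff \<rho>w_def pinner2_def matrix_vector_mult_def sum_UNIV_pair
      sum_distrib_left sum_distrib_right mult_ac) (rule allI, rule sum.swap)

section \<open>Leg numbering on threefold tensors\<close>

definition tens3 :: "complex^'n::finite \<Rightarrow> complex^'n \<Rightarrow> complex^'n \<Rightarrow> complex^('n\<times>'n\<times>'n)" where
  "tens3 a b c = (\<chi> p. case p of (i, j, k) \<Rightarrow> a$i * b$j * c$k)"

(* Elementary tensors with one two-leg factor; the suffix lists the legs of each factor. *)
definition tens_1_23 :: "complex^'n::finite \<Rightarrow> complex^('n\<times>'n) \<Rightarrow> complex^('n\<times>'n\<times>'n)" where
  "tens_1_23 u W = (\<chi> p. case p of (i, j, k) \<Rightarrow> u$i * W$(j, k))"

definition tens_12_3 :: "complex^('n::finite\<times>'n) \<Rightarrow> complex^'n \<Rightarrow> complex^('n\<times>'n\<times>'n)" where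
  "tens_12_3 W u = (\<chi> p. case p of (i, j, k) \<Rightarrow> W$(i, j) * u$k)"

definition tens_13_2 :: "complex^('n::finite\<times>'n) \<Rightarrow> complex^'n \<Rightarrow> complex^('n\<times>'n\<times>'n)" where
  "tens_13_2 W u = (\<chi> p. case p of (i, j, k) \<Rightarrow> W$(i, k) * u$j)"

lemma vec3_eqI: "(\<And>i j k. X$(i, j, k) = Y$(i, j, k)) \<Longrightarrow> X = Y"
  by (simp add: vec_eq_iff split_paired_all)

lemma tens3_eq_tens_1_23: "tens3 a b c = tens_1_23 a (tens b c)"
  by (rule vec3_eqI) (simp add: tens3_def tens_1_23_def mult_ac)

lemma tens3_eq_tens_12_3: "tens3 a b c = tens_12_3 (tens a b) c"
  by (rule vec3_eqI) (simp add: tens3_def tens_12_3_def)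

lemma tens3_eq_tens_13_2: "tens3 a b c = tens_13_2 (tens a c) b"
  by (rule vec3_eqI) (simp add: tens3_def tens_13_2_def mult_ac)

lemma tens_13_2_cancel:
  assumes "tens_13_2 W u = tens_13_2 W' u" "u \<noteq> 0"
  shows "W = W'"
proof -
  obtain j where "u$j \<noteq> 0" using assms(2) by (auto simp: vec_eq_iff)
  moreover have "W$(i, k) * u$j = W'$(i, k) * u$j" for i k
    using arg_cong[OF assms(1), of "\<lambda>X. X$(i, j, k)"] by (simp add: tens_13_2_def)
  ultimately show ?thesis by (simp add: vec_eq_iff split_paired_all)
qed

lemma sum_if_const: "(\<Sum>x\<in>A. if P then f x else 0) = (if P then sum f A else 0)"
  by simp

lemma leg23_tens_1_23: "leg23 M *v tens_1_23 u W = tens_1_23 u (M *v W)"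
  by (rule vec3_eqI) (simp add: leg23_def tens_1_23_def matrix_vector_mult_def sum_UNIV_triple sum_UNIV_pair
      sum_distrib_left if_distrib if_distribR sum_if_const mult_ac cong: if_cong)

lemma leg12_tens_12_3: "leg12 M *v tens_12_3 W u = tens_12_3 (M *v W) u"
  by (rule vec3_eqI) (simp add: leg12_def tens_12_3_def matrix_vector_mult_def sum_UNIV_triple sum_UNIV_pair
      sum_distrib_left if_distrib if_distribR sum_if_const mult_ac cong: if_cong)

lemma leg13_tens_13_2: "leg13 M *v tens_13_2 W u = tens_13_2 (M *v W) u"
  by (rule vec3_eqI) (simp add: leg13_def tens_13_2_def matrix_vector_mult_def sum_UNIV_triple sum_UNIV_pair
      sum_distrib_left if_distrib if_distribR sum_if_const mult_ac cong: if_cong)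

lemma cadj_leg12: "cadj (leg12 M) = leg12 (cadj M)"
  by (simp add: cadj_def leg12_def vec_eq_iff split_paired_all)

lemma cadj_leg13: "cadj (leg13 M) = leg13 (cadj M)"
  by (simp add: cadj_def leg13_def vec_eq_iff split_paired_all)

lemma cadj_leg23: "cadj (leg23 M) = leg23 (cadj M)"
  by (simp add: cadj_def leg23_def vec_eq_iff split_paired_all)

lemma leg12_mult: "leg12 (A ** B) = leg12 A ** leg12 B"
  by (simp add: vec_eq_iff split_paired_all leg12_def matrix_matrix_mult_def sum_UNIV_triple sum_UNIV_pair
      if_distrib if_distribR sum_if_const mult_ac cong: if_cong)

lemma leg23_mult: "leg23 (A ** B) = leg23 A ** leg23 B"
  by (simp add: vec_eq_iff split_paired_all leg23_def matrix_matrix_mult_def sum_UNIV_triple sum_UNIV_pair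
      if_distrib if_distribR sum_if_const mult_ac cong: if_cong)

lemma leg12_mat_1: "leg12 (mat 1) = mat 1"
  by (simp add: vec_eq_iff split_paired_all leg12_def mat_def)

lemma leg23_mat_1: "leg23 (mat 1) = mat 1"
  by (simp add: vec_eq_iff split_paired_all leg23_def mat_def)

lemma cinner_tens_13_2_tens_1_23:
  "cinner (tens_13_2 W y) (tens_1_23 u W') = cinner W (tens u (pinner1 y W'))"
  by (simp add: cinner_def tens_13_2_def tens_1_23_def pinner1_def sum_UNIV_triple sum_UNIV_pair
      sum_distrib_left mult_ac) (rule sum.cong[OF refl], rule sum.swap)

lemma cinner_tens_12_3_tens_13_2:
  "cinner (tens_12_3 W z) (tens_13_2 W' u) = cinner W (tens (pinner2 z W') u)"
  by (simp add: cinner_def tens_12_3_def tens_13_2_def pinner2_def sum_UNIV_triple sum_UNIV_pair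
      sum_distrib_left sum_distrib_right mult_ac)

lemma cinner_tens_12_3_tens_1_23_pinner2:
  "cinner (tens_12_3 W z) (tens_1_23 u W') = cinner W (tens u (pinner2 z W'))"
  by (simp add: cinner_def tens_12_3_def tens_1_23_def pinner2_def sum_UNIV_triple sum_UNIV_pair
      sum_distrib_left mult_ac)

lemma cinner_tens_12_3_tens_1_23_pinner1:
  "cinner (tens_12_3 W z) (tens_1_23 u W') = cinner (tens (pinner1 u W) z) W'"
  by (simp add: cinner_def tens_12_3_def tens_1_23_def pinner1_def sum_UNIV_triple sum_UNIV_pair
      sum_distrib_left sum_distrib_right mult_ac) (rule sum_rotate3)

lemma cinner_Lw: "cinner a (Lw V \<xi> \<eta> *v b) = cinner (tens \<xi> a) (V *v tens \<eta> b)"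
  by (simp add: Lw_apply cinner_pinner1)

lemma cinner_\<rho>w: "cinner a (\<rho>w V \<xi> \<eta> *v b) = cinner (tens a \<xi>) (V *v tens b \<eta>)"
  by (simp add: \<rho>w_apply cinner_pinner2)

lemma \<rho>w_scale_right: "\<rho>w V \<xi> (c *s \<eta>) *v b = c *s (\<rho>w V \<xi> \<eta> *v b)"
  by (simp add: vec_eq_iff \<rho>w_def matrix_vector_mult_def sum_distrib_left mult_ac)

section \<open>Fixed spaces of a multiplicative unitary\<close>

lemma mem_Hup: "\<eta> \<in> Hup V f \<longleftrightarrow> V *v tens f \<eta> = tens f \<eta>"
  by (simp add: Hup_def)

lemma mem_Hdown: "\<eta> \<in> Hdown V g \<longleftrightarrow> V *v tens \<eta> g = tens \<eta> g"
  by (simp add: Hdown_def)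

lemma sg_le_iff_mem_Hup: "sg_le V g f \<longleftrightarrow> g \<in> Hup V f"
  by (simp add: sg_le_def Hup_def)

lemma sg_le_iff_mem_Hdown: "sg_le V g f \<longleftrightarrow> f \<in> Hdown V g"
  by (simp add: sg_le_def Hdown_def)

lemma mem_Hup_self_iff: "f \<in> Hup V f \<longleftrightarrow> f \<in> Hdown V f"
  by (simp add: mem_Hup mem_Hdown)

lemma Hup_diff: "x \<in> Hup V f \<Longrightarrow> y \<in> Hup V f \<Longrightarrow> x - y \<in> Hup V f"
  by (simp add: mem_Hup tens_diff_right matrix_vector_mult_diff_distrib)

lemma Hup_scale: "x \<in> Hup V f \<Longrightarrow> c *s x \<in> Hup V f"
  by (simp add: mem_Hup tens_scale_right vector_scalar_commute)

lemma Hup_scale_cancel: "c *s x \<in> Hup V f \<Longrightarrow> c \<noteq> 0 \<Longrightarrow> x \<in> Hup V f"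
  by (simp add: mem_Hup tens_scale_right vector_scalar_commute)

lemma Hdown_scale: "x \<in> Hdown V g \<Longrightarrow> c *s x \<in> Hdown V g"
  by (simp add: mem_Hdown tens_scale_left vector_scalar_commute)

lemma Hdown_scale_cancel: "c *s x \<in> Hdown V g \<Longrightarrow> c \<noteq> 0 \<Longrightarrow> x \<in> Hdown V g"
  by (simp add: mem_Hdown tens_scale_left vector_scalar_commute)

lemma Hup_eq_if_cinner_eq:
  assumes "x \<in> Hup V f" "y \<in> Hup V f" "\<And>\<eta>. \<eta> \<in> Hup V f \<Longrightarrow> cinner \<eta> x = cinner \<eta> y"
  shows "x = y"
  using assms by (simp add: eq_if_cinner_diff_eq Hup_diff)

lemma Lw_fixed: "\<eta> \<in> Hup V f \<Longrightarrow> Lw V \<xi> f *v \<eta> = cinner \<xi> f *s \<eta>"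
  by (simp add: mem_Hup Lw_apply pinner1_tens)

lemma \<rho>w_fixed: "\<eta> \<in> Hdown V g \<Longrightarrow> \<rho>w V \<xi> g *v \<eta> = cinner \<xi> g *s \<eta>"
  by (simp add: mem_Hdown \<rho>w_apply pinner2_tens)

locale mult_unitary =
  fixes V :: "complex^('n::finite\<times>'n)^('n\<times>'n)"
  assumes multiplicative_unitary: "multiplicative_unitary V"
begin

lemma unitary: "unitary_op V"
  using multiplicative_unitary by (simp add: multiplicative_unitary_def)

lemma unitary_leg12: "unitary_op (leg12 V)"
  using unitary by (simp add: unitary_op_def cadj_leg12 flip: leg12_mult leg12_mat_1)

lemma unitary_leg23: "unitary_op (leg23 V)"
  using unitary by (simp add: unitary_op_def cadj_leg23 flip: leg23_mult leg23_mat_1)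

lemma leg13_leg23: "leg13 V ** leg23 V = cadj (leg12 V) ** leg23 V ** leg12 V"
proof -
  have "leg12 V ** (leg13 V ** leg23 V) = leg23 V ** leg12 V"
    using multiplicative_unitary by (simp add: multiplicative_unitary_def matrix_mul_assoc)
  then have "cadj (leg12 V) ** (leg12 V ** (leg13 V ** leg23 V)) = cadj (leg12 V) ** (leg23 V ** leg12 V)"
    by simp
  then show ?thesis
    using unitary_leg12 by (simp add: unitary_op_def matrix_mul_assoc)
qed

lemma leg12_leg13: "leg12 V ** leg13 V = leg23 V ** leg12 V ** cadj (leg23 V)"
proof -
  have "(leg12 V ** leg13 V) ** leg23 V = leg23 V ** leg12 V"
    using multiplicative_unitary by (simp add: multiplicative_unitary_def)
  then have "(leg12 V ** leg13 V ** leg23 V) ** cadj (leg23 V) = leg23 V ** leg12 V ** cadj (leg23 V)"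
    by simp
  then show ?thesis
    using unitary_leg23 by (simp add: unitary_op_def flip: matrix_mul_assoc)
qed

lemma fixed_cadj: "V *v w = w \<Longrightarrow> cadj V *v w = w"
  using unitary by (rule unitary_op_fixed_cadj)

lemma fixed_tens_trans:
  assumes "V *v tens a b = tens a b" and "V *v tens b c = tens b c" and "b \<noteq> 0"
  shows "V *v tens a c = tens a c"
proof -
  let ?t = "tens3 a b c"
  have fixed12: "leg12 V *v ?t = ?t"
    using assms(1) by (simp add: tens3_eq_tens_12_3 leg12_tens_12_3)
  have fixed23: "leg23 V *v ?t = ?t"
    using assms(2) by (simp add: tens3_eq_tens_1_23 leg23_tens_1_23)
  have "leg13 V *v ?t = leg13 V *v (leg23 V *v ?t)"
    by (simp add: fixed23)
  also have "\<dots> = cadj (leg12 V) *v (leg23 V *v (leg12 V *v ?t))"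
    by (simp add: matrix_vector_mul_assoc matrix_mul_assoc leg13_leg23)
  also have "\<dots> = cadj (leg12 V) *v ?t"
    by (simp add: fixed12 fixed23)
  also have "\<dots> = ?t"
    using unitary_leg12 fixed12 by (rule unitary_op_fixed_cadj)
  finally have "tens_13_2 (V *v tens a c) b = tens_13_2 (tens a c) b"
    by (simp add: tens3_eq_tens_13_2 leg13_tens_13_2)
  then show ?thesis using assms(3) by (rule tens_13_2_cancel)
qed

lemma Lw_mult:
  assumes "V *v tens \<eta>1 \<eta>2 = tens \<eta>1 \<eta>2"
  shows "Lw V \<xi>1 \<eta>1 *v (Lw V \<xi>2 \<eta>2 *v b) = Lw V (pinner1 \<eta>1 (V *v tens \<xi>1 \<xi>2)) \<eta>2 *v b"
proof (rule vec_eq_if_cinner_eq)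
  fix a
  (* The pentagon equation as V13 V23 = V12* V23 V12, where V12 fixes eta1 (x) eta2 (x) b. *)
  let ?X = "tens3 \<eta>1 \<eta>2 b" and ?Y = "tens3 \<xi>1 \<xi>2 a"
  have fixed12: "leg12 V *v ?X = ?X"
    using assms by (simp add: tens3_eq_tens_12_3 leg12_tens_12_3)
  have "cinner a (Lw V \<xi>1 \<eta>1 *v (Lw V \<xi>2 \<eta>2 *v b))
      = cinner (cadj V *v tens \<xi>1 a) (tens \<eta>1 (pinner1 \<xi>2 (V *v tens \<eta>2 b)))"
    by (subst cinner_Lw) (simp only: Lw_apply cinner_adj)
  also have "\<dots> = cinner (leg13 (cadj V) *v ?Y) (leg23 V *v ?X)"
    by (simp only: tens3_eq_tens_13_2[of \<xi>1] tens3_eq_tens_1_23[of \<eta>1] leg13_tens_13_2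
        leg23_tens_1_23 cinner_tens_13_2_tens_1_23)
  also have "\<dots> = cinner ?Y (leg13 V *v (leg23 V *v ?X))"
    by (simp add: cinner_adj[of ?Y] cadj_leg13)
  also have "\<dots> = cinner ?Y (cadj (leg12 V) *v (leg23 V *v (leg12 V *v ?X)))"
    by (simp add: matrix_vector_mul_assoc matrix_mul_assoc leg13_leg23)
  also have "\<dots> = cinner (leg12 V *v ?Y) (leg23 V *v ?X)"
    by (simp add: fixed12 cinner_adj[of ?Y "cadj (leg12 V)"])
  also have "\<dots> = cinner (tens_12_3 (V *v tens \<xi>1 \<xi>2) a) (tens_1_23 \<eta>1 (V *v tens \<eta>2 b))"
    by (simp only: tens3_eq_tens_12_3[of \<xi>1] tens3_eq_tens_1_23[of \<eta>1] leg12_tens_12_3 leg23_tens_1_23)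
  also have "\<dots> = cinner a (Lw V (pinner1 \<eta>1 (V *v tens \<xi>1 \<xi>2)) \<eta>2 *v b)"
    by (simp add: cinner_tens_12_3_tens_1_23_pinner1 cinner_Lw)
  finally show "cinner a (Lw V \<xi>1 \<eta>1 *v (Lw V \<xi>2 \<eta>2 *v b))
      = cinner a (Lw V (pinner1 \<eta>1 (V *v tens \<xi>1 \<xi>2)) \<eta>2 *v b)" .
qed

lemma \<rho>w_mult:
  assumes "V *v tens \<xi>1 \<xi>2 = tens \<xi>1 \<xi>2"
  shows "\<rho>w V \<xi>1 \<eta>1 *v (\<rho>w V \<xi>2 \<eta>2 *v b) = \<rho>w V \<xi>1 (pinner2 \<xi>2 (cadj V *v tens \<eta>1 \<eta>2)) *v b"
proof (rule vec_eq_if_cinner_eq)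
  fix a
  (* The pentagon equation as V12 V13 = V23 V12 V23*, where V23* fixes a (x) xi1 (x) xi2. *)
  let ?X = "tens3 b \<eta>1 \<eta>2" and ?Y = "tens3 a \<xi>1 \<xi>2"
  have fixed23: "cadj (leg23 V) *v ?Y = ?Y"
    using fixed_cadj[OF assms] by (simp add: cadj_leg23 tens3_eq_tens_1_23 leg23_tens_1_23)
  have "cinner a (\<rho>w V \<xi>1 \<eta>1 *v (\<rho>w V \<xi>2 \<eta>2 *v b))
      = cinner (cadj V *v tens a \<xi>1) (tens (pinner2 \<xi>2 (V *v tens b \<eta>2)) \<eta>1)"
    by (subst cinner_\<rho>w) (simp only: \<rho>w_apply cinner_adj)
  also have "\<dots> = cinner (leg12 (cadj V) *v ?Y) (leg13 V *v ?X)"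
    by (simp only: tens3_eq_tens_12_3[of a] tens3_eq_tens_13_2[of b] leg12_tens_12_3
        leg13_tens_13_2 cinner_tens_12_3_tens_13_2)
  also have "\<dots> = cinner ?Y (leg12 V *v (leg13 V *v ?X))"
    by (simp add: cinner_adj[of ?Y] cadj_leg12)
  also have "\<dots> = cinner ?Y (leg23 V *v (leg12 V *v (cadj (leg23 V) *v ?X)))"
    by (simp add: matrix_vector_mul_assoc matrix_mul_assoc leg12_leg13)
  also have "\<dots> = cinner (cadj (leg12 V) *v ?Y) (cadj (leg23 V) *v ?X)"
    by (simp add: cinner_adj[of ?Y] fixed23 cinner_adj[of _ "leg12 V"])
  also have "\<dots> = cinner (tens_12_3 (cadj V *v tens a \<xi>1) \<xi>2) (tens_1_23 b (cadj V *v tens \<eta>1 \<eta>2))"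
    by (simp only: cadj_leg12 cadj_leg23 tens3_eq_tens_12_3[of a] tens3_eq_tens_1_23[of b]
        leg12_tens_12_3 leg23_tens_1_23)
  also have "\<dots> = cinner a (\<rho>w V \<xi>1 (pinner2 \<xi>2 (cadj V *v tens \<eta>1 \<eta>2)) *v b)"
    by (simp add: cinner_tens_12_3_tens_1_23_pinner2 cinner_adj[of "tens a \<xi>1" V] cinner_\<rho>w)
  finally show "cinner a (\<rho>w V \<xi>1 \<eta>1 *v (\<rho>w V \<xi>2 \<eta>2 *v b))
      = cinner a (\<rho>w V \<xi>1 (pinner2 \<xi>2 (cadj V *v tens \<eta>1 \<eta>2)) *v b)" .
qed

lemma cinner_Lw_fixed: "\<eta> \<in> Hup V f \<Longrightarrow> cinner \<eta> (Lw V f \<xi> *v b) = cinner f \<xi> * cinner \<eta> b"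
  by (simp add: mem_Hup cinner_Lw cinner_adj[of _ V] fixed_cadj cinner_tens)

lemma cinner_\<rho>w_fixed: "\<eta> \<in> Hdown V g \<Longrightarrow> cinner \<eta> (\<rho>w V g \<xi> *v b) = cinner g \<xi> * cinner \<eta> b"
  by (simp add: mem_Hdown cinner_\<rho>w cinner_adj[of _ V] fixed_cadj cinner_tens)

lemma Lw_self_eq_iff:
  assumes "cinner f f = 1"
  shows "Lw V f f *v x = x \<longleftrightarrow> x \<in> Hup V f"
proof
  assume "Lw V f f *v x = x"
  then have "cinner (tens f x) (V *v tens f x) = cinner (tens f x) (tens f x)"
    using assms by (simp add: cinner_tens flip: cinner_Lw)
  then show "x \<in> Hup V f"
    using unitary by (simp add: mem_Hup unitary_op_fixed_iff_Re_cinner)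
qed (use assms in \<open>simp add: Lw_fixed\<close>)

lemma \<rho>w_self_eq_iff:
  assumes "cinner g g = 1"
  shows "\<rho>w V g g *v x = x \<longleftrightarrow> x \<in> Hdown V g"
proof
  assume "\<rho>w V g g *v x = x"
  then have "cinner (tens x g) (V *v tens x g) = cinner (tens x g) (tens x g)"
    using assms by (simp add: cinner_tens flip: cinner_\<rho>w)
  then show "x \<in> Hdown V g"
    using unitary by (simp add: mem_Hdown unitary_op_fixed_iff_Re_cinner)
qed (use assms in \<open>simp add: \<rho>w_fixed\<close>)

lemma Lw_self_range:
  assumes "cinner f f = 1" "f \<in> Hup V f"
  shows "Lw V f f *v b \<in> Hup V f"
proof -
  have "Lw V f f *v (Lw V f f *v b) = Lw V f f *v b"
    using assms Lw_mult[of f f f f b] by (simp add: mem_Hup pinner1_tens)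
  then show ?thesis using assms(1) by (simp add: Lw_self_eq_iff)
qed

lemma \<rho>w_self_range:
  assumes "cinner g g = 1" "g \<in> Hdown V g"
  shows "\<rho>w V g g *v b \<in> Hdown V g"
proof -
  have "\<rho>w V g g *v (\<rho>w V g g *v b) = \<rho>w V g g *v b"
    using assms \<rho>w_mult[of g g g g b] by (simp add: mem_Hdown fixed_cadj pinner2_tens)
  then show ?thesis using assms(1) by (simp add: \<rho>w_self_eq_iff)
qed

lemma Lw_self_eqI:
  assumes "cinner f f = 1" "f \<in> Hup V f" "z \<in> Hup V f"
    and "\<And>\<eta>. \<eta> \<in> Hup V f \<Longrightarrow> cinner \<eta> z = cinner \<eta> x"
  shows "Lw V f f *v x = z"
  using assms by (intro Hup_eq_if_cinner_eq[OF Lw_self_range]) (simp_all add: cinner_Lw_fixed)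

lemma Lw_self_eq_if_Hup_eq:
  assumes "cinner f f = 1" "f \<in> Hup V f" "cinner g g = 1" "g \<in> Hup V g" "Hup V f = Hup V g"
  shows "Lw V f f *v x = Lw V g g *v x"
  using assms by (intro Lw_self_eqI) (simp_all add: Lw_self_range cinner_Lw_fixed)

lemma \<rho>w_self_adjoint:
  assumes "cinner g g = 1" "g \<in> Hdown V g"
  shows "cinner y (\<rho>w V g g *v x) = cinner (\<rho>w V g g *v y) x"
proof -
  have "cinner (\<rho>w V g g *v y) (\<rho>w V g g *v x) = cinner (\<rho>w V g g *v y) x"
    and "cinner (\<rho>w V g g *v x) (\<rho>w V g g *v y) = cinner (\<rho>w V g g *v x) y"
    using assms by (simp_all add: cinner_\<rho>w_fixed \<rho>w_self_range)
  then show ?thesis by (metis cinner_commute)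
qed

lemma fixed_if_cinner_\<rho>w_self:
  assumes "cinner g g = 1" "g \<in> Hdown V g" "cinner f f = 1" "cinner f (\<rho>w V g g *v f) = 1"
  shows "f \<in> Hdown V g"
proof -
  let ?z = "\<rho>w V g g *v f"
  have "cinner ?z ?z = cinner ?z f"
    using assms(1,2) by (simp add: cinner_\<rho>w_fixed \<rho>w_self_range)
  then have "?z = 1 *s f"
    using assms(3,4) cinner_commute[of ?z f] by (intro eq_scale_if_cinner_eq) simp_all
  then show ?thesis using \<rho>w_self_range[OF assms(1,2), of f] by simp
qed

lemma \<rho>w_eq_scale_\<rho>w_self:
  assumes "cinner g g = 1" "g \<in> Hdown V g" "f \<in> Hdown V g"
  shows "\<rho>w V f g *v b = cinner f g *s (\<rho>w V g g *v b)"
proof -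
  have "\<rho>w V f g *v (\<rho>w V g g *v b) = \<rho>w V f g *v b"
    using assms \<rho>w_mult[of f g g g b] by (simp add: mem_Hdown fixed_cadj pinner2_tens)
  moreover have "\<rho>w V f g *v (\<rho>w V g g *v b) = cinner f g *s (\<rho>w V g g *v b)"
    using assms(1,2) by (simp add: \<rho>w_fixed \<rho>w_self_range)
  ultimately show ?thesis by simp
qed

lemma sg_le_trans: "sg_le V h g \<Longrightarrow> sg_le V g f \<Longrightarrow> g \<noteq> 0 \<Longrightarrow> sg_le V h f"
  unfolding sg_le_def by (rule fixed_tens_trans)

lemma sg_le_iff_Hup_subset:
  assumes "g \<in> Hup V g" "g \<noteq> 0"
  shows "sg_le V g f \<longleftrightarrow> Hup V g \<subseteq> Hup V f"
  using assms fixed_tens_trans[of f g] by (auto simp: sg_le_def mem_Hup)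

lemma sg_le_iff_Hdown_subset:
  assumes "f \<in> Hdown V f" "f \<noteq> 0"
  shows "sg_le V g f \<longleftrightarrow> Hdown V f \<subseteq> Hdown V g"
  using assms fixed_tens_trans[of _ f g] by (auto simp: sg_le_def mem_Hdown)

end

section \<open>Multiplicity one and pre-subgroups\<close>

lemma pre_subgroupD:
  assumes "pre_subgroup V e f"
  shows "cinner f f = 1" "f \<noteq> 0" "f \<in> Hup V f" "f \<in> Hdown V f"
    and "cinner f e \<noteq> 0" "cinner e f = cinner f e"
proof -
  show f: "cinner f f = 1" using assms by (simp add: pre_subgroup_def cinner_self)
  then show "f \<noteq> 0" by auto
  show "f \<in> Hup V f" "f \<in> Hdown V f" using assms by (simp_all add: pre_subgroup_def mem_Hup mem_Hdown)
  show "cinner f e \<noteq> 0" using assms by (auto simp: pre_subgroup_def)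
  have "cnj (cinner f e) = cinner f e" using assms by (simp add: pre_subgroup_def complex_eq_iff)
  then show "cinner e f = cinner f e" by (metis cinner_commute)
qed

locale mult_unitary_mult_one = mult_unitary V for V :: "complex^('n::finite\<times>'n)^('n\<times>'n)" +
  fixes e eh :: "complex^'n"
  assumes multiplicity_one: "multiplicity_one V"
    and e_fixed: "fixed_vec V e" and e_unit: "norm e = 1"
    and eh_cofixed: "cofixed_vec V eh" and eh_unit: "norm eh = 1"
    and cinner_e_eh: "cinner e eh = complex_of_real (1 / sqrt (real CARD('n)))"
begin

lemma cinner_e_e: "cinner e e = 1"
  using e_unit by (simp add: cinner_self)

lemma cinner_eh_eh: "cinner eh eh = 1"
  using eh_unit by (simp add: cinner_self)

lemma mem_Hup_e: "\<eta> \<in> Hup V e"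
  using e_fixed by (simp add: fixed_vec_def mem_Hup)

lemma mem_Hdown_e_iff: "x \<in> Hdown V e \<longleftrightarrow> fixed_vec V x"
proof
  assume "x \<in> Hdown V e"
  moreover have "e \<noteq> 0" using cinner_e_e by auto
  ultimately show "fixed_vec V x"
    using fixed_tens_trans[of x e] mem_Hup_e by (auto simp: fixed_vec_def mem_Hdown mem_Hup)
qed (simp add: fixed_vec_def mem_Hdown)

lemma mem_Hdown_eh: "\<eta> \<in> Hdown V eh"
  using eh_cofixed by (simp add: cofixed_vec_def mem_Hdown)

lemma eh_mem_Hup: "eh \<in> Hup V g"
  using mem_Hdown_eh by (simp add: mem_Hup mem_Hdown)

lemma cinner_e_eh_ne_0: "cinner e eh \<noteq> 0"
  by (simp add: cinner_e_eh)

lemma fixed_vec_eq_scale_e: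
  assumes "fixed_vec V x"
  shows "x = cinner e x *s e"
proof -
  obtain \<xi> where "{x. fixed_vec V x} = range (\<lambda>c::complex. c *s \<xi>)"
    using multiplicity_one by (auto simp: multiplicity_one_def)
  then obtain c c' where c: "x = c *s \<xi>" and c': "e = c' *s \<xi>"
    using assms e_fixed by blast
  have "c' \<noteq> 0" using c' cinner_e_e by auto
  then have "x = (c / c') *s e" by (simp add: c c' vector_smult_assoc)
  then show ?thesis by (simp add: cinner_scale_right cinner_e_e)
qed

lemma \<rho>w_e_e: "\<rho>w V e e *v y = cinner e y *s e"
proof -
  have e: "e \<in> Hdown V e" by (simp add: mem_Hdown_e_iff e_fixed)
  then have "fixed_vec V (\<rho>w V e e *v y)"
    using \<rho>w_self_range[OF cinner_e_e] by (simp add: mem_Hdown_e_iff[symmetric])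
  moreover have "cinner e (\<rho>w V e e *v y) = cinner e y"
    using e by (simp add: cinner_\<rho>w_fixed cinner_e_e)
  ultimately show ?thesis by (metis fixed_vec_eq_scale_e)
qed

lemma cinner_e_Lw_e: "cinner e (Lw V \<xi> f *v e) = cinner e f * cinner \<xi> e"
  by (simp add: cinner_Lw flip: cinner_\<rho>w) (simp add: \<rho>w_e_e cinner_scale_right)

lemma Lw_self_e:
  assumes "cinner f f = 1" "f \<in> Hup V f"
  shows "Lw V f f *v e = cinner f e *s f"
proof (rule eq_scale_if_cinner_eq[OF assms(1)])
  let ?x = "Lw V f f *v e"
  show "cinner f ?x = cinner f e"
    using assms by (simp add: cinner_Lw_fixed)
  have "cinner ?x ?x = cinner ?x e"
    using assms by (simp add: cinner_Lw_fixed Lw_self_range)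
  also have "\<dots> = cnj (cinner e f * cinner f e)"
    by (simp add: cinner_commute[of ?x e] cinner_e_Lw_e)
  finally show "cinner ?x ?x = cnj (cinner f e) * cinner f e"
    by (simp add: cinner_commute[of e f])
qed

lemma cinner_e_mem_Hup:
  assumes "cinner f f = 1" "f \<in> Hup V f" "\<xi> \<in> Hup V f"
  shows "cinner f e * cinner \<xi> f = cinner \<xi> e"
  using cinner_Lw_fixed[OF assms(3), of f e] assms(1,2) by (simp add: Lw_self_e cinner_scale_right)

lemma Hup_eh_subset: "Hup V eh \<subseteq> Hup V x"
proof -
  have "eh \<noteq> 0" using cinner_eh_eh by auto
  then show ?thesis
    using fixed_tens_trans[of x eh] mem_Hdown_eh by (auto simp: mem_Hup mem_Hdown)
qed

lemma \<rho>w_self_eh: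
  assumes g: "cinner g g = 1" "g \<in> Hup V g" and ge: "cinner g e \<noteq> 0"
  shows "\<rho>w V g g *v eh = cinner g eh *s g"
proof -
  have eh: "eh \<in> Hup V eh" using mem_Hdown_eh by (simp add: mem_Hup_self_iff)
  have factor: "cinner g e * cinner eh g = cinner eh e"
    using g eh_mem_Hup by (rule cinner_e_mem_Hup)
  have "Lw V eh eh *v g = cinner eh g *s eh"
  proof (rule Lw_self_eqI[OF cinner_eh_eh eh Hup_scale[OF eh]])
    fix \<xi> assume \<xi>: "\<xi> \<in> Hup V eh"
    have "cinner g e * cinner \<xi> g = cinner \<xi> e"
      using g \<xi> Hup_eh_subset by (intro cinner_e_mem_Hup) auto
    moreover have "cinner eh e * cinner \<xi> eh = cinner \<xi> e"
      using \<xi> eh by (intro cinner_e_mem_Hup[OF cinner_eh_eh])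
    ultimately have "cinner g e * (cinner eh g * cinner \<xi> eh) = cinner g e * cinner \<xi> g"
      using factor by (simp add: mult.assoc[symmetric])
    then show "cinner \<xi> (cinner eh g *s eh) = cinner \<xi> g"
      using ge by (simp add: cinner_scale_right)
  qed
  then have eh_g: "cinner eh (\<rho>w V g g *v eh) = cinner eh g * cinner g eh"
    by (simp add: cinner_\<rho>w flip: cinner_Lw) (simp add: cinner_scale_right)
  show ?thesis
  proof (rule eq_scale_if_cinner_eq[OF g(1)])
    let ?z = "\<rho>w V g g *v eh"
    have gg: "g \<in> Hdown V g" using g(2) by (simp add: mem_Hup_self_iff)
    then show "cinner g ?z = cinner g eh"
      using g(1) by (simp add: cinner_\<rho>w_fixed)
    have "cinner ?z ?z = cinner ?z eh"
      using g(1) gg by (simp add: cinner_\<rho>w_fixed \<rho>w_self_range)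
    then show "cinner ?z ?z = cnj (cinner g eh) * cinner g eh"
      using eh_g by (simp add: cinner_commute[of ?z eh] cinner_commute[of eh g])
  qed
qed

lemma cinner_ne_0_if_sg_le:
  assumes pf: "pre_subgroup V e f" and pg: "pre_subgroup V e g" and gf: "sg_le V g f"
  shows "cinner f g \<noteq> 0"
proof
  assume "cinner f g = 0"
  then have "cinner g f = 0" by (metis cinner_commute complex_cnj_zero)
  moreover have "cinner f e * cinner g f = cinner g e"
    using pre_subgroupD[OF pf] gf by (intro cinner_e_mem_Hup) (simp_all add: sg_le_iff_mem_Hup)
  ultimately show False using pre_subgroupD(5)[OF pg] by simp
qed

lemma sg_le_iff_Hup2:
  assumes pf: "pre_subgroup V e f" and pg: "pre_subgroup V e g"
  shows "sg_le V g f \<longleftrightarrow> Hup2 V f g = Hup V f"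
proof
  assume gf: "sg_le V g f"
  have range: "Lw V f g *v x \<in> Hup V f" for x
  proof -
    have "Lw V f f *v (Lw V f g *v x) = Lw V f g *v x"
      using Lw_mult[of f g f f x] gf pre_subgroupD[OF pf] by (simp add: sg_le_def mem_Hup pinner1_tens)
    then show ?thesis using pre_subgroupD(1)[OF pf] by (simp add: Lw_self_eq_iff)
  qed
  have "Lw V f g *v \<eta> = cinner f g *s \<eta>" if "\<eta> \<in> Hup V f" for \<eta>
    using range that
    by (intro Hup_eq_if_cinner_eq[where V = V and f = f])
      (simp_all add: Hup_scale cinner_Lw_fixed cinner_scale_right)
  then show "Hup2 V f g = Hup V f"
    unfolding Hup2_def using range cinner_ne_0_if_sg_le[OF pf pg gf]
    by (intro range_eq_if_acts_as_scalar)
next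
  assume range: "Hup2 V f g = Hup V f"
  obtain b where "f = Lw V f g *v b"
    using range pre_subgroupD(3)[OF pf] by (auto simp: Hup2_def)
  then have "cinner f g * cinner f b = 1"
    using cinner_Lw_fixed[of f f g b] pre_subgroupD[OF pf] by simp
  moreover have "cinner f g *s g \<in> Hup V f"
    using range Lw_fixed[OF pre_subgroupD(3)[OF pg], of f] by (metis Hup2_def rangeI)
  ultimately show "sg_le V g f"
    by (auto simp: sg_le_iff_mem_Hup dest: Hup_scale_cancel)
qed

lemma sg_le_if_Lw_e_mem_Hup:
  assumes pf: "pre_subgroup V e f" and pg: "pre_subgroup V e g" and "Lw V g f *v e \<in> Hup V f"
  shows "sg_le V g f"
proof -
  note f = pre_subgroupD[OF pf] and g = pre_subgroupD[OF pg]
  let ?u = "Lw V f f *v g"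
  have "Lw V ?u f *v e = Lw V f f *v (Lw V g f *v e)"
    using Lw_mult[of f f f g e] f by (simp add: mem_Hup Lw_apply)
  also have "\<dots> = Lw V g f *v e"
    using assms(3) f by (simp add: Lw_self_eq_iff)
  finally have "cinner e f * cinner ?u e = cinner e f * cinner g e"
    by (metis cinner_e_Lw_e)
  then have "cinner ?u e = cinner g e" using f by simp
  moreover have "cinner e ?u = cinner e g * cinner f (\<rho>w V g g *v f)"
    using \<rho>w_eq_scale_\<rho>w_self[OF g(1,4), of e] mem_Hup_e
    by (simp add: cinner_Lw cinner_scale_right mem_Hdown mem_Hup flip: cinner_\<rho>w)
  ultimately have "cinner g e * cnj (cinner f (\<rho>w V g g *v f)) = cinner g e"
    using g by (metis cinner_commute complex_cnj_mult)
  then have "cinner f (\<rho>w V g g *v f) = 1"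
    using g by (metis complex_cnj_cnj complex_cnj_one mult_cancel_left2)
  then show ?thesis
    using fixed_if_cinner_\<rho>w_self f g by (simp add: sg_le_iff_mem_Hdown)
qed

lemma sg_le_iff_Hup2_swap:
  assumes pf: "pre_subgroup V e f" and pg: "pre_subgroup V e g"
  shows "sg_le V g f \<longleftrightarrow> Hup2 V g f = Hup V f"
proof
  assume gf: "sg_le V g f"
  have range: "Lw V g f *v x \<in> Hup V f" for x
  proof -
    have "Lw V f f *v (Lw V g f *v x) = Lw V g f *v x"
      using Lw_mult[of f f f g x] gf pre_subgroupD[OF pf]
      by (simp add: sg_le_def mem_Hup pinner1_tens)
    then show ?thesis using pre_subgroupD(1)[OF pf] by (simp add: Lw_self_eq_iff)
  qed
  have "cinner g f \<noteq> 0"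
    using cinner_ne_0_if_sg_le[OF pf pg gf] by (metis cinner_commute complex_cnj_zero)
  then show "Hup2 V g f = Hup V f"
    unfolding Hup2_def using range Lw_fixed by (intro range_eq_if_acts_as_scalar)
next
  assume "Hup2 V g f = Hup V f"
  then have "Lw V g f *v e \<in> Hup V f" by (auto simp: Hup2_def)
  then show "sg_le V g f" by (rule sg_le_if_Lw_e_mem_Hup[OF pf pg])
qed

lemma mem_Hdown_e: "e \<in> Hdown V g"
  using mem_Hup_e by (simp add: mem_Hup mem_Hdown)

lemma \<rho>w_eq_scale_if_range:
  assumes pg: "pre_subgroup V e g" and range: "\<And>b. \<rho>w V f g *v b \<in> Hdown V g"
  shows "\<rho>w V f g *v b = cinner f g *s (\<rho>w V g g *v b)"
proof -
  note g = pre_subgroupD[OF pg]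
  note \<rho>w_e_g = \<rho>w_eq_scale_\<rho>w_self[OF g(1,4) mem_Hdown_e]
  have "\<rho>w V g g *v (\<rho>w V f g *v b) = \<rho>w V f g *v b"
    using range g(1) by (simp add: \<rho>w_self_eq_iff)
  then have "cinner e g *s (\<rho>w V f g *v b) = \<rho>w V e g *v (\<rho>w V f g *v b)"
    by (simp add: \<rho>w_e_g)
  also have "\<dots> = \<rho>w V e (pinner2 f (cadj V *v tens g g)) *v b"
    using mem_Hup_e by (intro \<rho>w_mult) (simp add: mem_Hup)
  also have "\<dots> = cinner e g *s (cinner f g *s (\<rho>w V g g *v b))"
    using g by (simp add: mem_Hdown fixed_cadj pinner2_tens \<rho>w_scale_right \<rho>w_e_g vector_smult_assoc
        mult.commute)
  finally have "cinner e g *s (\<rho>w V f g *v b) = (cinner e g * cinner f g) *s (\<rho>w V g g *v b)"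
    by (simp only: vector_smult_assoc)
  then show ?thesis
    by (rule vector_smult_cancel) (simp add: g(5,6))
qed

lemma sg_le_iff_Hdown2:
  assumes pf: "pre_subgroup V e f" and pg: "pre_subgroup V e g"
  shows "sg_le V g f \<longleftrightarrow> Hdown2 V f g = Hdown V g"
proof
  assume gf: "sg_le V g f"
  then have scale: "\<rho>w V f g *v b = cinner f g *s (\<rho>w V g g *v b)" for b
    using pre_subgroupD[OF pg] by (intro \<rho>w_eq_scale_\<rho>w_self) (simp_all add: sg_le_iff_mem_Hdown)
  show "Hdown2 V f g = Hdown V g"
    unfolding Hdown2_def using cinner_ne_0_if_sg_le[OF pf pg gf] pre_subgroupD[OF pg]
    by (intro range_eq_if_acts_as_scalar) (simp_all add: scale Hdown_scale \<rho>w_self_range \<rho>w_fixed)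
next
  assume range: "Hdown2 V f g = Hdown V g"
  note f = pre_subgroupD[OF pf] and g = pre_subgroupD[OF pg]
  have scale: "\<rho>w V f g *v b = cinner f g *s (\<rho>w V g g *v b)" for b
    using range by (intro \<rho>w_eq_scale_if_range[OF pg]) (auto simp: Hdown2_def)
  obtain b where "g = \<rho>w V f g *v b"
    using range g(4) by (auto simp: Hdown2_def)
  then have "cinner f g \<noteq> 0" using g(2) by (auto simp: scale)
  moreover have "cinner f g = cinner f g * cinner f (\<rho>w V g g *v f)"
    using cinner_\<rho>w_fixed[OF f(4), of g f] f(1) by (simp add: scale cinner_scale_right)
  ultimately have "cinner f (\<rho>w V g g *v f) = 1" by simp
  then show "sg_le V g f"
    using fixed_if_cinner_\<rho>w_self f g by (simp add: sg_le_iff_mem_Hdown)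
qed

lemma pinner2_cadj_eh:
  assumes pf: "pre_subgroup V e f" and pg: "pre_subgroup V e g" and gf: "sg_le V g f"
  shows "pinner2 g (cadj V *v tens eh f) = (cnj (cinner f g) * cinner g eh) *s g"
proof (rule vec_eq_if_cinner_eq)
  fix x
  note g = pre_subgroupD[OF pg]
  have "cinner x (pinner2 g (cadj V *v tens eh f)) = cnj (cinner eh (\<rho>w V f g *v x))"
    by (simp add: cinner_pinner2 cinner_adj[of _ "cadj V"] cinner_\<rho>w cinner_commute[of "V *v tens x g"])
  also have "\<dots> = cnj (cinner f g * cinner (\<rho>w V g g *v eh) x)"
    using gf \<rho>w_eq_scale_\<rho>w_self[OF g(1,4), of f]
    by (simp add: sg_le_iff_mem_Hdown cinner_scale_right \<rho>w_self_adjoint[OF g(1,4), of eh])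
  also have "\<dots> = cinner x ((cnj (cinner f g) * cinner g eh) *s g)"
    using g by (simp add: \<rho>w_self_eh cinner_scale_left cinner_scale_right cinner_commute[of g x])
  finally show "cinner x (pinner2 g (cadj V *v tens eh f))
      = cinner x ((cnj (cinner f g) * cinner g eh) *s g)" .
qed

lemma \<rho>w_swap_eq_scale:
  assumes pf: "pre_subgroup V e f" and pg: "pre_subgroup V e g" and gf: "sg_le V g f"
  obtains c where "c \<noteq> 0" "\<And>b. \<rho>w V g f *v b = c *s (\<rho>w V g g *v b)"
proof -
  note g = pre_subgroupD[OF pg]
  let ?k = "cnj (cinner f g) * cinner g eh"
  have "cinner g e * cinner eh g = cinner eh e"
    using g(1,3) eh_mem_Hup by (rule cinner_e_mem_Hup)
  moreover have "cinner eh e \<noteq> 0"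
    using cinner_e_eh_ne_0 cinner_commute[of eh e] by simp
  ultimately have "cinner g eh \<noteq> 0"
    using cinner_commute[of g eh] by auto
  then have "?k * cinner e g / cinner e eh \<noteq> 0"
    using cinner_ne_0_if_sg_le[OF pf pg gf] g cinner_e_eh_ne_0 by simp
  moreover have "\<rho>w V g f *v b = (?k * cinner e g / cinner e eh) *s (\<rho>w V g g *v b)" for b
  proof -
  have "cinner e eh *s (\<rho>w V g f *v b) = \<rho>w V e eh *v (\<rho>w V g f *v b)"
    using mem_Hdown_eh by (simp add: \<rho>w_fixed)
  also have "\<dots> = \<rho>w V e (pinner2 g (cadj V *v tens eh f)) *v b"
    using mem_Hup_e by (intro \<rho>w_mult) (simp add: mem_Hup)
  also have "\<dots> = (?k * cinner e g) *s (\<rho>w V g g *v b)"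
    using g mem_Hdown_e
    by (simp add: pinner2_cadj_eh[OF pf pg gf] \<rho>w_scale_right vector_smult_assoc
        \<rho>w_eq_scale_\<rho>w_self[OF g(1,4) mem_Hdown_e])
  also have "\<dots> = (cinner e eh * (?k * cinner e g / cinner e eh)) *s (\<rho>w V g g *v b)"
    using cinner_e_eh_ne_0 by simp
  finally show ?thesis
    using cinner_e_eh_ne_0 by (rule vector_smult_cancel)
  qed
  ultimately show thesis by (rule that)
qed

lemma sg_le_iff_Hdown2_swap:
  assumes pf: "pre_subgroup V e f" and pg: "pre_subgroup V e g"
  shows "sg_le V g f \<longleftrightarrow> Hdown2 V g f = Hdown V g"
proof
  assume gf: "sg_le V g f"
  obtain c where "c \<noteq> 0" and scale: "\<And>b. \<rho>w V g f *v b = c *s (\<rho>w V g g *v b)"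
    using \<rho>w_swap_eq_scale[OF pf pg gf] by blast
  then show "Hdown2 V g f = Hdown V g"
    unfolding Hdown2_def using pre_subgroupD[OF pg]
    by (intro range_eq_if_acts_as_scalar) (simp_all add: scale Hdown_scale \<rho>w_self_range \<rho>w_fixed)
next
  assume range: "Hdown2 V g f = Hdown V g"
  note f = pre_subgroupD[OF pf] and g = pre_subgroupD[OF pg]
  obtain b where "g = \<rho>w V g f *v b"
    using range g(4) by (auto simp: Hdown2_def)
  then have "cinner g f * cinner g b = 1"
    using cinner_\<rho>w_fixed[OF g(4), of f b] g(1) by simp
  moreover have "cinner g f *s f \<in> Hdown V g"
    using range \<rho>w_fixed[OF f(4), of g] by (metis Hdown2_def rangeI)
  ultimately show "sg_le V g f"
    by (auto simp: sg_le_iff_mem_Hdown dest: Hdown_scale_cancel)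
qed

lemma sg_le_antisym:
  assumes pf: "pre_subgroup V e f" and pg: "pre_subgroup V e g"
    and gf: "sg_le V g f" and fg: "sg_le V f g"
  shows "f = g"
proof -
  note f = pre_subgroupD[OF pf] and g = pre_subgroupD[OF pg]
  have "Hup V f = Hup V g"
    using gf fg f g by (simp add: sg_le_iff_Hup_subset)
  then have eq: "cinner f e *s f = cinner g e *s g"
    using f g Lw_self_eq_if_Hup_eq[of f g e] by (simp add: Lw_self_e)
  define r s where "r = Re (cinner f e)" and "s = Re (cinner g e)"
  have r: "cinner f e = r" "r > 0" and s: "cinner g e = s" "s > 0"
    using pf pg by (simp_all add: pre_subgroup_def complex_eq_iff r_def s_def)
  have "cinner e (cinner f e *s f) = cinner e (cinner g e *s g)"
    by (simp add: eq)
  then have "complex_of_real (r * r) = complex_of_real (s * s)"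
    using f(6) g(6) r s by (simp add: cinner_scale_right)
  then have "r\<^sup>2 = s\<^sup>2"
    by (simp only: of_real_eq_iff power2_eq_square)
  then have "r = s"
    using r(2) s(2) by (simp add: power2_eq_iff_nonneg)
  then show ?thesis using eq r s by simp
qed

lemma pre_subgroup_e: "pre_subgroup V e e"
  using e_unit cinner_e_e mem_Hup_e by (simp add: pre_subgroup_def mem_Hup)

lemma sg_le_e: "sg_le V g e"
  using mem_Hup_e by (simp add: sg_le_iff_mem_Hup)

lemma pre_subgroup_eh: "pre_subgroup V e eh"
  using eh_unit mem_Hdown_eh cinner_e_eh cinner_commute[of eh e]
  by (simp add: pre_subgroup_def mem_Hdown)

lemma eh_sg_le: "sg_le V eh g"
  using eh_mem_Hup by (simp add: sg_le_iff_mem_Hup)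

lemma pre_subgroup_sg_le_iff:
  assumes pf: "pre_subgroup V e f" and pg: "pre_subgroup V e g"
  shows "(sg_le V g f \<longleftrightarrow> Hup V g \<subseteq> Hup V f) \<and> (sg_le V g f \<longleftrightarrow> Hdown V f \<subseteq> Hdown V g)
    \<and> (sg_le V g f \<longleftrightarrow> Hup2 V f g = Hup V f) \<and> (sg_le V g f \<longleftrightarrow> Hup2 V g f = Hup V f)
    \<and> (sg_le V g f \<longleftrightarrow> Hdown2 V f g = Hdown V g) \<and> (sg_le V g f \<longleftrightarrow> Hdown2 V g f = Hdown V g)"
  using sg_le_iff_Hup_subset[OF pre_subgroupD(3,2)[OF pg]]
    sg_le_iff_Hdown_subset[OF pre_subgroupD(4,2)[OF pf]]
    sg_le_iff_Hup2[OF pf pg] sg_le_iff_Hup2_swap[OF pf pg]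
    sg_le_iff_Hdown2[OF pf pg] sg_le_iff_Hdown2_swap[OF pf pg]
  by (intro conjI)

lemma pre_subgroup_sg_le_trans:
  "pre_subgroup V e g \<Longrightarrow> sg_le V h g \<Longrightarrow> sg_le V g f \<Longrightarrow> sg_le V h f"
  using pre_subgroupD(2) sg_le_trans by blast

lemma sg_le_refl: "pre_subgroup V e f \<Longrightarrow> sg_le V f f"
  using pre_subgroupD(3) by (simp add: sg_le_iff_mem_Hup)

end

theorem proposition3p7:
  fixes V :: "complex^('n::finite\<times>'n)^('n\<times>'n)" and e ehat :: "complex^'n"
  assumes mu: "multiplicative_unitary V"
    and mult1: "multiplicity_one V"
    and e_fix: "fixed_vec V e" and e_unit: "norm e = 1"
    and eh_cofix: "cofixed_vec V ehat" and eh_unit: "norm ehat = 1"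
    and e_eh: "cinner e ehat = complex_of_real (1 / sqrt (real CARD('n)))"
  shows "(\<forall>f g. pre_subgroup V e f \<and> pre_subgroup V e g \<longrightarrow>
            ((V *v tens f g = tens f g \<longleftrightarrow> Hup V g \<subseteq> Hup V f)
           \<and> (V *v tens f g = tens f g \<longleftrightarrow> Hdown V f \<subseteq> Hdown V g)
           \<and> (V *v tens f g = tens f g \<longleftrightarrow> Hup2 V f g = Hup V f)
           \<and> (V *v tens f g = tens f g \<longleftrightarrow> Hup2 V g f = Hup V f)
           \<and> (V *v tens f g = tens f g \<longleftrightarrow> Hdown2 V f g = Hdown V g)
           \<and> (V *v tens f g = tens f g \<longleftrightarrow> Hdown2 V g f = Hdown V g)))
       \<and> (\<forall>f. pre_subgroup V e f \<longrightarrow> sg_le V f f)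
       \<and> (\<forall>f g. pre_subgroup V e f \<and> pre_subgroup V e g \<and> sg_le V g f \<and> sg_le V f g \<longrightarrow> f = g)
       \<and> (\<forall>f g h. pre_subgroup V e f \<and> pre_subgroup V e g \<and> pre_subgroup V e h
                  \<and> sg_le V h g \<and> sg_le V g f \<longrightarrow> sg_le V h f)
       \<and> pre_subgroup V e e \<and> (\<forall>g. pre_subgroup V e g \<longrightarrow> sg_le V g e)
       \<and> pre_subgroup V e ehat \<and> (\<forall>g. pre_subgroup V e g \<longrightarrow> sg_le V ehat g)"
proof -
  interpret mult_unitary_mult_one V e ehat
    using assms by unfold_locales
  show ?thesis
    unfolding sg_le_def[symmetric]
    using pre_subgroup_sg_le_iff sg_le_refl sg_le_antisym pre_subgroup_sg_le_trans
      pre_subgroup_e sg_le_e pre_subgroup_eh eh_sg_le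
    by (intro conjI allI impI) ((elim conjE)?, blast)+
qed

end
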